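(* Let $z$ lie in the upper half-plane and let $E_4,\Delta_{24}$ and $\rho_n$ ($n\in\mathbb{N}$) be as in the context. Then for every integer $n\geq 3$, $$\rho_n(z)=2E_4(z)\,\rho_{n-1}(z)-E_4(z)^2\,\rho_{n-2}(z)+2^8\Delta_{24}(z)\,\rho_{n-3}(z).$$
   Context: For $z$ with $\mathrm{Im}(z)>0$ put $q=e^{\pi\sqrt{-1}z}$ and define $\vartheta_2(z)=\sum_{m\in\mathbb{Z}}q^{(m+1/2)^2}$, $\vartheta_3(z)=\sum_{m\in\mathbb{Z}}q^{m^2}$, $\vartheta_4(z)=\sum_{m\in\mathbb{Z}}(-q)^{m^2}$. Define $E_4(z)=\frac12(\vartheta_2(z)^8+\vartheta_3(z)^8+\vartheta_4(z)^8)$, $\Delta_{24}(z)=\left(\frac{\vartheta_2(z)\vartheta_3(z)\vartheta_4(z)}{2}\right)^8$, and for a nonnegative integer $n$, $$\rho_n(z)=\frac{\vartheta_3(z)^{8(n+1)+4}-\vartheta_2(z)^{8(n+1)+4}-\vartheta_4(z)^{8(n+1)+4}}{(\vartheta_2(z)\vartheta_3(z)\vartheta_4(z))^4}.$$ *)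

theory Defs
  imports "HOL-Analysis.Analysis"
begin

text \<open>Jacobi theta functions on the upper half-plane, with q = exp(pi i z) and
  q^r read as exp(pi i z r) for real exponents r.  The sums over the integers are
  absolutely convergent for Im z > 0, rendered as unordered infinite sums.\<close>

definition theta2 :: "complex \<Rightarrow> complex" where
  "theta2 z = (\<Sum>\<^sub>\<infinity>m\<in>(UNIV::int set). exp (pi * \<i> * z * of_real ((real_of_int m + 1/2)^2)))"

definition theta3 :: "complex \<Rightarrow> complex" where
  "theta3 z = (\<Sum>\<^sub>\<infinity>m\<in>(UNIV::int set). exp (pi * \<i> * z) ^ (nat (m^2)))"

definition theta4 :: "complex \<Rightarrow> complex" where
  "theta4 z = (\<Sum>\<^sub>\<infinity>m\<in>(UNIV::int set). (- exp (pi * \<i> * z)) ^ (nat (m^2)))"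

definition E4 :: "complex \<Rightarrow> complex" where
  "E4 z = (theta2 z ^ 8 + theta3 z ^ 8 + theta4 z ^ 8) / 2"

definition Delta24 :: "complex \<Rightarrow> complex" where
  "Delta24 z = (theta2 z * theta3 z * theta4 z / 2) ^ 8"

definition rho :: "nat \<Rightarrow> complex \<Rightarrow> complex" where
  "rho n z = (theta3 z ^ (8*(n+1)+4) - theta2 z ^ (8*(n+1)+4) - theta4 z ^ (8*(n+1)+4))
             / (theta2 z * theta3 z * theta4 z) ^ 4"

end

(*
  With A = theta3^4, B = theta2^4, C = theta4^4 one has
  rho n = (A^(2n+3) - B^(2n+3) - C^(2n+3)) / (theta2 theta3 theta4)^4, 2 E4 = A^2 + B^2 + C^2 and
  2^8 Delta24 = A^2 B^2 C^2.  Jacobi's identity A = B + C gives A^2 B^2 + B^2 C^2 + C^2 A^2 = E4^2,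
  so A^2, B^2, C^2 are the roots of T^3 - 2 E4 T^2 + E4^2 T - 2^8 Delta24 and the recurrence holds
  for each of the three odd power sequences separately.

  Jacobi's identity follows from the duplication formula for theta_char z a = sum_m q^((m+a)^2),
  obtained by splitting the product of two such series over Z^2 by the parity of m + n and
  substituting (m, n) = (r + s, r - s) resp. (r + s + 1, r - s).  With P = theta_char (2z) 0 and
  Q = theta_char (2z) (1/2) it gives theta3^2 = P^2 + Q^2, theta2^2 = 2 P Q and theta4^2 = P^2 - Q^2.
*)

theory Submission
  imports Defs
begin

lemma summable_on_int_geometric:
  fixes r :: real
  assumes "0 \<le> r" "r < 1"
  shows "(\<lambda>m::int. r ^ nat \<bar>m\<bar>) summable_on UNIV"
proof -
  have geom: "(\<lambda>n::nat. r ^ n) summable_on UNIV"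
    using assms by (subst summable_on_UNIV_nonneg_real_iff) (auto intro: summable_geometric)
  have "(\<lambda>m::int. r ^ nat \<bar>m\<bar>) summable_on (range int \<union> range (\<lambda>n. - int n))"
    by (intro summable_on_union; subst summable_on_reindex) (auto simp: o_def geom inj_on_def)
  also have "range int \<union> range (\<lambda>n. - int n) = UNIV"
    by (auto intro: range_eqI[of _ _ "nat _"] simp: image_iff) presburger
  finally show ?thesis .
qed

lemma summable_on_int_gaussian:
  fixes t a :: real
  assumes "t > 0"
  shows "(\<lambda>m::int. exp (- t * (of_int m + a)^2)) summable_on UNIV"
proof -
  have "(\<lambda>m::int. exp (t * (\<bar>a\<bar> + 1)) * exp (- t) ^ nat \<bar>m\<bar>) summable_on UNIV"
    using assms by (intro summable_on_cmult_right summable_on_int_geometric) auto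
  then show ?thesis
  proof (rule summable_on_comparison_test)
    fix m :: int
    have abs_le: "\<bar>x\<bar> \<le> x^2 + 1" for x :: real
    proof -
      have "0 \<le> (\<bar>x\<bar> - 1)^2"
        by simp
      also have "\<dots> = x^2 + 1 - 2 * \<bar>x\<bar>"
        by (simp add: power2_eq_square algebra_simps)
      finally show ?thesis
        by (simp add: abs_ge_zero)
    qed
    have "\<bar>of_int m\<bar> - \<bar>a\<bar> - 1 \<le> (of_int m + a)^2"
      using abs_le[of "of_int m + a"] by linarith
    then have "t * (\<bar>of_int m\<bar> - \<bar>a\<bar> - 1) \<le> t * (of_int m + a)^2"
      using assms by (simp add: mult_left_mono)
    then have "- t * (of_int m + a)^2 \<le> t * (\<bar>a\<bar> + 1) + of_nat (nat \<bar>m\<bar>) * (- t)"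
      by (simp add: algebra_simps)
    then show "exp (- t * (of_int m + a)^2) \<le> exp (t * (\<bar>a\<bar> + 1)) * exp (- t) ^ nat \<bar>m\<bar>"
      by (simp only: exp_of_nat_mult[symmetric] exp_add[symmetric] exp_le_cancel_iff)
  qed simp
qed

lemma summable_on_product_complex:
  fixes f g :: "'a \<Rightarrow> complex"
  assumes "f summable_on A" and "g summable_on B"
  shows "(\<lambda>(x, y). f x * g y) summable_on A \<times> B"
proof -
  have f: "(\<lambda>x. norm (f x)) summable_on A" and g: "(\<lambda>y. norm (g y)) summable_on B"
    using assms by (simp_all add: summable_on_iff_abs_summable_on_complex)
  have "(\<lambda>x. norm (f x) * (\<Sum>\<^sub>\<infinity>y\<in>B. norm (g y))) summable_on A"
    using f by (rule summable_on_cmult_left)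
  then have "(\<lambda>p. norm ((\<lambda>(x, y). f x * g y) p)) summable_on A \<times> B"
    by (intro Infinite_Sum.abs_summable_on_Sigma_iff[THEN iffD2])
       (auto simp: norm_mult infsum_cmult_right' infsum_nonneg abs_mult intro: summable_on_cmult_right g)
  then show ?thesis
    by (simp add: summable_on_iff_abs_summable_on_complex)
qed

lemma infsum_product_complex:
  fixes f g :: "'a \<Rightarrow> complex"
  assumes "f summable_on A" and "g summable_on B"
  shows "(\<Sum>\<^sub>\<infinity>(x, y)\<in>A \<times> B. f x * g y) = infsum f A * infsum g B"
proof -
  have "(\<Sum>\<^sub>\<infinity>(x, y)\<in>A \<times> B. f x * g y) = (\<Sum>\<^sub>\<infinity>x\<in>A. \<Sum>\<^sub>\<infinity>y\<in>B. f x * g y)"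
    using infsum_Sigma_banach[OF summable_on_product_complex[OF assms]] by simp
  also have "\<dots> = infsum f A * infsum g B"
    by (simp add: infsum_cmult_left' infsum_cmult_right')
  finally show ?thesis .
qed

lemma bij_betw_int_pairs_parity_class:
  fixes c :: int
  shows "bij_betw (\<lambda>(r, s). (r + s + c, r - s)) UNIV {(m, n). even (m + n - c)}"
proof (rule bij_betwI')
  fix p q :: "int \<times> int"
  show "((\<lambda>(r, s). (r + s + c, r - s)) p = (\<lambda>(r, s). (r + s + c, r - s)) q) = (p = q)"
    by (cases p; cases q) auto
  show "(\<lambda>(r, s). (r + s + c, r - s)) p \<in> {(m, n). even (m + n - c)}"
  proof (cases p)
    case (Pair r s)
    have "r + s + c + (r - s) - c = 2 * r"
      by simp
    then show ?thesis
      unfolding Pair by (simp only: case_prod_conv mem_Collect_eq) simp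
  qed
next
  fix q :: "int \<times> int"
  assume "q \<in> {(m, n). even (m + n - c)}"
  moreover obtain m n where q: "q = (m, n)"
    by (cases q)
  ultimately have "even (m + n - c)"
    by (simp only: mem_Collect_eq case_prod_conv)
  then obtain k where "m + n - c = 2 * k" ..
  then have "q = (\<lambda>(r, s). (r + s + c, r - s)) (k, m - c - k)"
    using q by simp
  then show "\<exists>p\<in>UNIV. q = (\<lambda>(r, s). (r + s + c, r - s)) p"
    by blast
qed

lemma infsum_parity_class_reindex:
  fixes h :: "int \<times> int \<Rightarrow> 'a::banach" and c :: int
  shows "infsum h {(m, n). even (m + n - c)} = (\<Sum>\<^sub>\<infinity>(r, s)\<in>UNIV. h (r + s + c, r - s))"
  using infsum_reindex_bij_betw[OF bij_betw_int_pairs_parity_class, of h c]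
  by (simp add: case_prod_unfold)

lemma infsum_int_pairs_parity_split:
  fixes h :: "int \<times> int \<Rightarrow> 'a::banach"
  assumes "h summable_on UNIV"
  shows "infsum h UNIV = (\<Sum>\<^sub>\<infinity>(r, s)\<in>UNIV. h (r + s, r - s)) + (\<Sum>\<^sub>\<infinity>(r, s)\<in>UNIV. h (r + s + 1, r - s))"
proof -
  \<comment> \<open>The \<open>- 0\<close> keeps \<open>?E\<close> a literal instance of infsum_parity_class_reindex\<close>
  let ?E = "{(m, n). even (m + n - 0 :: int)}" and ?O = "{(m, n). even (m + n - 1 :: int)}"
  have parity: "even (m + n - 1) \<longleftrightarrow> \<not> even (m + n - 0)" for m n :: int
    by presburger
  have "p \<in> ?O \<longleftrightarrow> p \<notin> ?E" for p
    by (cases p) (simp only: mem_Collect_eq case_prod_conv parity)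
  then have "UNIV = ?E \<union> ?O" and "?E \<inter> ?O = {}"
    by blast+
  then have "infsum h UNIV = infsum h ?E + infsum h ?O"
    using infsum_Un_disjoint summable_on_subset_banach[OF assms] by (metis subset_UNIV)
  then show ?thesis unfolding infsum_parity_class_reindex by simp
qed

definition theta_term :: "complex \<Rightarrow> real \<Rightarrow> int \<Rightarrow> complex" where
  "theta_term z a m = exp (pi * \<i> * z * of_real ((real_of_int m + a)^2))"

definition theta_char :: "complex \<Rightarrow> real \<Rightarrow> complex" where
  "theta_char z a = (\<Sum>\<^sub>\<infinity>m\<in>UNIV. theta_term z a m)"

lemma summable_on_theta_term:
  assumes "Im z > 0"
  shows "theta_term z a summable_on UNIV"
proof -
  have "norm (theta_term z a m) = exp (- (pi * Im z) * (real_of_int m + a)^2)" for m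
    by (simp add: theta_term_def)
  then have "(\<lambda>m. norm (theta_term z a m)) summable_on UNIV"
    using summable_on_int_gaussian[of "pi * Im z" a] assms by simp
  then show ?thesis
    by (simp add: summable_on_iff_abs_summable_on_complex)
qed

lemma theta_term_mult:
  fixes c :: int
  shows "theta_term z a (r + s + c) * theta_term z b (r - s)
       = theta_term (2 * z) ((a + b + c) / 2) r * theta_term (2 * z) ((a - b + c) / 2) s"
proof -
  define x y u v where "x = (of_int (r + s + c) + a)^2" and "y = (of_int (r - s) + b)^2"
    and "u = (of_int r + (a + b + c) / 2)^2" and "v = (of_int s + (a - b + c) / 2)^2"
  have "x + y = 2 * u + 2 * v"
    unfolding x_def y_def u_def v_def by (simp add: power2_eq_square field_simps)
  then have "complex_of_real x + of_real y = 2 * of_real u + 2 * of_real v"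
    by (metis of_real_add of_real_mult of_real_numeral)
  then have "pi * \<i> * z * of_real x + pi * \<i> * z * of_real y
           = pi * \<i> * (2 * z) * of_real u + pi * \<i> * (2 * z) * of_real v"
    by algebra
  then show ?thesis
    unfolding theta_term_def x_def y_def u_def v_def exp_add[symmetric] by simp
qed

lemma theta_char_mult_eq_infsum:
  assumes "Im z > 0"
  shows "theta_char z a * theta_char z b = (\<Sum>\<^sub>\<infinity>(m, n)\<in>UNIV. theta_term z a m * theta_term z b n)"
  unfolding theta_char_def
  using infsum_product_complex[OF summable_on_theta_term summable_on_theta_term, OF assms assms] by simp

lemma theta_char_mult:
  assumes "Im z > 0"
  shows "theta_char z a * theta_char z b
       = theta_char (2 * z) ((a + b) / 2) * theta_char (2 * z) ((a - b) / 2)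
       + theta_char (2 * z) ((a + b + 1) / 2) * theta_char (2 * z) ((a - b + 1) / 2)"
proof -
  have "(\<lambda>(m, n). theta_term z a m * theta_term z b n) summable_on UNIV"
    using summable_on_product_complex[OF summable_on_theta_term summable_on_theta_term, OF assms assms]
    by simp
  note parity_split = infsum_int_pairs_parity_split[OF this]
  have "theta_char z a * theta_char z b = (\<Sum>\<^sub>\<infinity>(m, n)\<in>UNIV. theta_term z a m * theta_term z b n)"
    using assms by (rule theta_char_mult_eq_infsum)
  also have "\<dots> = (\<Sum>\<^sub>\<infinity>(r, s)\<in>UNIV. theta_term z a (r + s) * theta_term z b (r - s))
                 + (\<Sum>\<^sub>\<infinity>(r, s)\<in>UNIV. theta_term z a (r + s + 1) * theta_term z b (r - s))"
    using parity_split by simp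
  also have "\<dots> = (\<Sum>\<^sub>\<infinity>(r, s)\<in>UNIV. theta_term (2 * z) ((a + b) / 2) r * theta_term (2 * z) ((a - b) / 2) s)
                 + (\<Sum>\<^sub>\<infinity>(r, s)\<in>UNIV. theta_term (2 * z) ((a + b + 1) / 2) r * theta_term (2 * z) ((a - b + 1) / 2) s)"
    using theta_term_mult[where c = 0] theta_term_mult[where c = 1]
    by (simp only: add_0_right of_int_0 of_int_1)
  also have "\<dots> = theta_char (2 * z) ((a + b) / 2) * theta_char (2 * z) ((a - b) / 2)
                 + theta_char (2 * z) ((a + b + 1) / 2) * theta_char (2 * z) ((a - b + 1) / 2)"
    using assms by (simp add: theta_char_mult_eq_infsum)
  finally show ?thesis .
qed

lemma theta_char_add_1: "theta_char z (a + 1) = theta_char z a"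
proof -
  have "theta_char z (a + 1) = (\<Sum>\<^sub>\<infinity>m\<in>UNIV. theta_term z a (m + 1))"
    unfolding theta_char_def by (rule infsum_cong) (simp add: theta_term_def add_ac)
  also have "\<dots> = theta_char z a"
    unfolding theta_char_def
    by (rule infsum_reindex_bij_witness[where i = "\<lambda>m. m - 1" and j = "\<lambda>m. m + 1"]) auto
  finally show ?thesis .
qed

lemma theta_term_add_2: "theta_term (z + 2) a m = cis (2 * pi * (real_of_int m + a)^2) * theta_term z a m"
  unfolding theta_term_def cis_conv_exp exp_add[symmetric] by (simp add: algebra_simps)

lemma theta_char_0_add_2: "theta_char (z + 2) 0 = theta_char z 0"
proof -
  have "(real_of_int m)^2 \<in> \<int>" for m
    by simp
  then show ?thesis
    unfolding theta_char_def theta_term_add_2 by simp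
qed

lemma theta_char_half_add_2: "theta_char (z + 2) (1 / 2) = \<i> * theta_char z (1 / 2)"
proof -
  have "cis (2 * pi * (real_of_int m + 1 / 2)^2) = \<i>" for m
  proof -
    have "2 * pi * (real_of_int m + 1 / 2)^2 = 2 * pi * of_int (m^2 + m) + pi / 2"
      by (simp add: power2_eq_square algebra_simps)
    then show ?thesis
      by (simp add: cis_mult[symmetric])
  qed
  then show ?thesis
    unfolding theta_char_def theta_term_add_2 by (simp add: infsum_cmult_right')
qed

lemma theta2_eq_theta_char: "theta2 z = theta_char z (1 / 2)"
  unfolding theta2_def theta_char_def theta_term_def by simp

lemma theta3_eq_theta_char: "theta3 z = theta_char z 0"
proof -
  have "exp (pi * \<i> * z) ^ nat (m^2) = theta_term z 0 m" for m
    unfolding theta_term_def exp_of_nat_mult[symmetric] by (simp add: algebra_simps)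
  then show ?thesis
    unfolding theta3_def theta_char_def by simp
qed

lemma theta4_eq_theta3_add_1: "theta4 z = theta3 (z + 1)"
  unfolding theta4_def theta3_def by (simp add: distrib_left exp_add)

lemma jacobi_identity:
  assumes "Im z > 0"
  shows "theta3 z ^ 4 = theta2 z ^ 4 + theta4 z ^ 4"
proof -
  define A B where "A = theta_char (2 * z) 0" and "B = theta_char (2 * z) (1 / 2)"
  have "theta3 z ^ 2 = A^2 + B^2"
    using theta_char_mult[OF assms, of 0 0] by (simp add: theta3_eq_theta_char A_def B_def power2_eq_square)
  moreover have "theta2 z ^ 2 = 2 * A * B"
    using theta_char_mult[OF assms, of "1 / 2" "1 / 2"]
    by (simp add: theta2_eq_theta_char theta_char_add_1[of _ 0, simplified] A_def B_def power2_eq_square)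
  moreover have "theta4 z ^ 2 = A^2 - B^2"
  proof -
    have "Im (z + 1) > 0" and "2 * (z + 1) = 2 * z + 2" and "\<i> * B * (\<i> * B) = - (B * B)"
      using assms by (simp_all add: mult_ac)
    then show ?thesis
      using theta_char_mult[of "z + 1" 0 0]
      by (simp add: theta4_eq_theta3_add_1 theta3_eq_theta_char theta_char_0_add_2 theta_char_half_add_2
                    A_def B_def power2_eq_square)
  qed
  ultimately show ?thesis
    by algebra
qed

lemma power_six_eq_if_sum_eq:
  fixes A B C X E :: "'a::field_char_0"
  assumes "A = B + C" and "X \<in> {A, B, C}" and "E = (A^2 + B^2 + C^2) / 2"
  shows "X^6 = 2 * E * X^4 - E^2 * X^2 + A^2 * B^2 * C^2"
proof -
  have "A^2 + B^2 + C^2 = 2 * (B^2 + B * C + C^2)"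
    using assms(1) by (simp add: power2_eq_square algebra_simps)
  then have "E = 2 * (B^2 + B * C + C^2) / 2"
    using assms(3) by (simp only:)
  then have E: "E = B^2 + B * C + C^2"
    by (metis nonzero_mult_div_cancel_left zero_neq_numeral)
  from assms(2) consider "X = A" | "X = B" | "X = C"
    by blast
  then show ?thesis
    using E assms(1) by cases algebra+
qed

lemma power_recurrence_if_sextic:
  fixes x p q r :: "'a::comm_semiring_1"
  assumes "x^6 = p * x^4 + q * x^2 + r"
  shows "x^(k + 6) = p * x^(k + 4) + q * x^(k + 2) + r * x^k"
proof -
  have "x^(k + 6) = x^k * (p * x^4 + q * x^2 + r)"
    by (simp only: power_add assms)
  then show ?thesis
    by (simp only: power_add) (simp add: algebra_simps)
qed

lemma power_diff_recurrence:
  fixes A B C E :: "'a::field_char_0"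
  assumes "A = B + C" and "E = (A^2 + B^2 + C^2) / 2"
  shows "A^(k + 6) - B^(k + 6) - C^(k + 6)
       = 2 * E * (A^(k + 4) - B^(k + 4) - C^(k + 4)) - E^2 * (A^(k + 2) - B^(k + 2) - C^(k + 2))
         + A^2 * B^2 * C^2 * (A^k - B^k - C^k)"
proof -
  have "X^(k + 6) = 2 * E * X^(k + 4) + (- (E^2)) * X^(k + 2) + A^2 * B^2 * C^2 * X^k"
    if "X \<in> {A, B, C}" for X
    using power_six_eq_if_sum_eq[OF assms(1) that assms(2)] by (intro power_recurrence_if_sextic) simp
  then have "A^(k + 6) = 2 * E * A^(k + 4) + (- (E^2)) * A^(k + 2) + A^2 * B^2 * C^2 * A^k"
    and "B^(k + 6) = 2 * E * B^(k + 4) + (- (E^2)) * B^(k + 2) + A^2 * B^2 * C^2 * B^k"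
    and "C^(k + 6) = 2 * E * C^(k + 4) + (- (E^2)) * C^(k + 2) + A^2 * B^2 * C^2 * C^k"
    by simp_all
  then show ?thesis
    by (simp only:) (simp add: algebra_simps)
qed

lemma rho_eq_odd_powers:
  "rho n z = ((theta3 z ^ 4) ^ (2 * n + 3) - (theta2 z ^ 4) ^ (2 * n + 3) - (theta4 z ^ 4) ^ (2 * n + 3))
             / (theta2 z * theta3 z * theta4 z) ^ 4"
proof -
  have "8 * (n + 1) + 4 = 4 * (2 * n + 3)"
    by simp
  then show ?thesis
    unfolding rho_def by (simp only: power_mult)
qed

lemma E4_eq_sum_squares: "E4 z = ((theta3 z ^ 4)^2 + (theta2 z ^ 4)^2 + (theta4 z ^ 4)^2) / 2"
  unfolding E4_def by (simp add: add_ac flip: power_mult)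

lemma Delta24_eq_product_squares: "2^8 * Delta24 z = (theta3 z ^ 4)^2 * (theta2 z ^ 4)^2 * (theta4 z ^ 4)^2"
  unfolding Delta24_def by (simp add: power_mult_distrib power_divide mult_ac flip: power_mult)

theorem lemma2p3:
  fixes z :: complex and n :: nat
  assumes "Im z > 0" and "n \<ge> 3"
  shows "rho n z = 2 * E4 z * rho (n-1) z - E4 z ^ 2 * rho (n-2) z
                   + 2^8 * Delta24 z * rho (n-3) z"
proof -
  obtain k where n: "n = k + 3"
    using assms(2) by (metis add.commute le_Suc_ex)
  define D where "D = (theta2 z * theta3 z * theta4 z) ^ 4"
  define N where "N j = (theta3 z ^ 4) ^ j - (theta2 z ^ 4) ^ j - (theta4 z ^ 4) ^ j" for j
  have rho: "rho j z = N (2 * j + 3) / D" for j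
    unfolding rho_eq_odd_powers N_def D_def ..
  have "N (2 * k + 3 + 6) = 2 * E4 z * N (2 * k + 3 + 4) - E4 z ^ 2 * N (2 * k + 3 + 2)
                            + 2^8 * Delta24 z * N (2 * k + 3)"
    unfolding N_def Delta24_eq_product_squares
    by (rule power_diff_recurrence[OF jacobi_identity[OF assms(1)] E4_eq_sum_squares])
  moreover have "2 * n + 3 = 2 * k + 3 + 6" "2 * (n - 1) + 3 = 2 * k + 3 + 4"
    "2 * (n - 2) + 3 = 2 * k + 3 + 2" "2 * (n - 3) + 3 = 2 * k + 3"
    using n by simp_all
  ultimately show ?thesis
    unfolding rho by (simp only:) (simp add: diff_divide_distrib add_divide_distrib)
qed

end
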